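(* Consider an ensemble of $m$ learners $l_1,\dots,l_m$ processing a data stream of $n$ data elements, where $e_i$ denotes an access to the data structures of learner $l_i$ and $e_1,\dots,e_m$ are distinct, so that the training phase accesses each $e_i$ exactly $n$ times. Mini-batching provides optimal access locality: taking a single mini-batch containing the whole stream yields the trace $e_1^n e_2^n\cdots e_m^n$ (each $e_i$ accessed $n$ consecutive times, learner after learner), whose total reuse distance is $m(m+n-1)=\mathcal{O}(m^2)$ for fixed mini-batch size, and no other ordering of these accesses has a smaller total reuse distance.
   Context: A trace is a finite sequence of references to data items. The reuse distance of an access in a trace is the number of distinct data items accessed since the previous access to the same item, including the reused item itself (so a finite reuse distance is at least $1$ and at most the number $m$ of distinct items). The reuse distance of the first access to an item is $\infty$; in computing totals, every such infinite value is replaced by $m$. The total reuse distance of a trace is the sum of the reuse distances of all its accesses (with this convention). *)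

theory Defs
  imports Main
begin

text \<open>If there is a previous access to the same item, with the most recent one at
  position i, the distance is the number of distinct items accessed at positions
  i+1..j (this includes the reused item itself, accessed at j).
  For a first access the (infinite) distance is replaced by m = card (set t),
  the number of distinct items of the trace.\<close>
definition reuse_distance :: "'a list \<Rightarrow> nat \<Rightarrow> nat" where
  "reuse_distance t j =
     (if \<exists>i<j. t ! i = t ! j
      then (let i = (GREATEST i. i < j \<and> t ! i = t ! j)
            in card (set (drop (i + 1) (take (j + 1) t))))
      else card (set t))"

definition total_reuse_distance :: "'a list \<Rightarrow> nat" where
  "total_reuse_distance t = (\<Sum>j<length t. reuse_distance t j)"

definition minibatch_trace :: "nat \<Rightarrow> nat \<Rightarrow> (nat \<Rightarrow> 'a) \<Rightarrow> 'a list" where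
  "minibatch_trace m n e = concat (map (\<lambda>i. replicate n (e i)) [1..<m+1])"

end

theory Submission
  imports Defs
begin

text \<open>A first access costs the number \<open>m\<close> of distinct items, and there are exactly \<open>m\<close> first
  accesses; every other access costs at least \<open>1\<close>, since the reused item itself is counted.
  Hence any trace of length \<open>L\<close> over \<open>m\<close> items has total reuse distance at least
  \<open>m\<^sup>2 + (L - m)\<close>. In a trace where equal items are contiguous, every reuse is of the
  immediately preceding access and costs exactly \<open>1\<close>, so the bound is attained; the
  mini-batch trace \<open>e\<^sub>1\<^sup>n \<dots> e\<^sub>m\<^sup>n\<close> is such a trace, with \<open>L = m n\<close>.\<close>

definition first_occurrences :: "'a list \<Rightarrow> nat set" where
  "first_occurrences t = {j. j < length t \<and> \<not> (\<exists>i<j. t ! i = t ! j)}"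

lemma first_occurrences_subset: "first_occurrences t \<subseteq> {..<length t}"
  unfolding first_occurrences_def by auto

lemma bij_betw_nth_first_occurrences: "bij_betw (nth t) (first_occurrences t) (set t)"
  unfolding bij_betw_def
proof
  show "inj_on (nth t) (first_occurrences t)"
    unfolding inj_on_def first_occurrences_def by (metis (mono_tags, lifting) mem_Collect_eq nat_neq_iff)
  show "nth t ` first_occurrences t = set t"
  proof
    show "nth t ` first_occurrences t \<subseteq> set t"
      unfolding first_occurrences_def by auto
  next
    show "set t \<subseteq> nth t ` first_occurrences t"
    proof
      fix x assume "x \<in> set t"
      then obtain k where k: "k < length t" "t ! k = x" by (auto simp: in_set_conv_nth)
      define j where "j = (LEAST j. t ! j = x)"
      have "t ! j = x" "j \<le> k"
        unfolding j_def using k(2) by (auto intro: LeastI Least_le)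
      moreover have "\<not> (\<exists>i<j. t ! i = t ! j)"
        using \<open>t ! j = x\<close> not_less_Least unfolding j_def by metis
      ultimately show "x \<in> nth t ` first_occurrences t"
        using k unfolding first_occurrences_def by force
    qed
  qed
qed

lemma card_first_occurrences: "card (first_occurrences t) = card (set t)"
  using bij_betw_nth_first_occurrences by (rule bij_betw_same_card)

lemma card_repeated_accesses:
  "card ({..<length t} - first_occurrences t) = length t - card (set t)"
  using first_occurrences_subset[of t] card_first_occurrences[of t]
  by (simp add: card_Diff_subset finite_subset)

lemma reuse_distance_ge_1:
  assumes "j < length t" "j \<notin> first_occurrences t"
  shows "1 \<le> reuse_distance t j"
proof -
  have reused: "\<exists>i<j. t ! i = t ! j"
    using assms unfolding first_occurrences_def by auto
  define i where "i = (GREATEST i. i < j \<and> t ! i = t ! j)"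
  have "i < j \<and> t ! i = t ! j"
    unfolding i_def using reused by (rule GreatestI_ex_nat[where b=j]) auto
  then have "drop (i + 1) (take (j + 1) t) \<noteq> []"
    using assms(1) by simp
  then show ?thesis
    using reused by (simp add: reuse_distance_def Let_def i_def Suc_le_eq card_gt_0_iff)
qed

lemma reuse_distance_repeat_previous:
  assumes "j < length t" "0 < j" "t ! (j - 1) = t ! j"
  shows "reuse_distance t j = 1"
proof -
  have reused: "\<exists>i<j. t ! i = t ! j"
    using assms by (intro exI[of _ "j - 1"]) auto
  have "(GREATEST i. i < j \<and> t ! i = t ! j) = j - 1"
    by (rule Greatest_equality) (use assms in auto)
  moreover have "drop j (take (j + 1) t) = [t ! j]"
    using assms(1) by (simp add: take_Suc_conv_app_nth)
  ultimately show ?thesis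
    using reused assms(2) by (simp add: reuse_distance_def Let_def)
qed

lemma total_reuse_distance_split:
  "total_reuse_distance t = card (set t) * card (set t)
     + (\<Sum>j\<in>{..<length t} - first_occurrences t. reuse_distance t j)"
proof -
  have "total_reuse_distance t = (\<Sum>j\<in>{..<length t} - first_occurrences t. reuse_distance t j)
      + (\<Sum>j\<in>first_occurrences t. reuse_distance t j)"
    unfolding total_reuse_distance_def
    by (rule sum.subset_diff[OF first_occurrences_subset]) simp
  moreover have "(\<Sum>j\<in>first_occurrences t. reuse_distance t j) = (\<Sum>j\<in>first_occurrences t. card (set t))"
    by (rule sum.cong) (auto simp: first_occurrences_def reuse_distance_def)
  ultimately show ?thesis
    using card_first_occurrences[of t] by simp
qed

lemma total_reuse_distance_lower_bound:
  "card (set t) * card (set t) + (length t - card (set t)) \<le> total_reuse_distance t"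
proof -
  have "(\<Sum>j\<in>{..<length t} - first_occurrences t. 1) \<le>
        (\<Sum>j\<in>{..<length t} - first_occurrences t. reuse_distance t j)"
    by (rule sum_mono) (use reuse_distance_ge_1 in blast)
  then show ?thesis
    using total_reuse_distance_split[of t] card_repeated_accesses[of t] by simp
qed

lemma total_reuse_distance_contiguous:
  assumes contiguous: "\<And>i j. i < j \<Longrightarrow> j < length t \<Longrightarrow> t ! i = t ! j \<Longrightarrow> t ! (j - 1) = t ! j"
  shows "total_reuse_distance t = card (set t) * card (set t) + (length t - card (set t))"
proof -
  have "(\<Sum>j\<in>{..<length t} - first_occurrences t. reuse_distance t j) =
        (\<Sum>j\<in>{..<length t} - first_occurrences t. 1)"
  proof (rule sum.cong)
    fix j assume "j \<in> {..<length t} - first_occurrences t"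
    then obtain i where "i < j" "j < length t" "t ! i = t ! j"
      unfolding first_occurrences_def by auto
    then show "reuse_distance t j = 1"
      using contiguous by (intro reuse_distance_repeat_previous) auto
  qed simp
  then show ?thesis
    using total_reuse_distance_split[of t] card_repeated_accesses[of t] by simp
qed

lemma minibatch_trace_Suc:
  "minibatch_trace (Suc m) n e = minibatch_trace m n e @ replicate n (e (Suc m))"
  by (simp add: minibatch_trace_def)

lemma length_minibatch_trace: "length (minibatch_trace m n e) = m * n"
  by (induction m) (simp_all add: minibatch_trace_Suc, simp add: minibatch_trace_def)

lemma set_minibatch_trace:
  assumes "n \<ge> 1"
  shows "set (minibatch_trace m n e) = e ` {1..m}"
proof (induction m)
  case 0
  then show ?case by (simp add: minibatch_trace_def)
next
  case (Suc m)
  have "{1..Suc m} = insert (Suc m) {1..m}" by auto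
  then show ?case
    using Suc assms by (simp add: minibatch_trace_Suc)
qed

lemma nth_minibatch_trace:
  "j < m * n \<Longrightarrow> minibatch_trace m n e ! j = e (j div n + 1)"
proof (induction m)
  case 0
  then show ?case by simp
next
  case (Suc m)
  show ?case
  proof (cases "j < m * n")
    case True
    then show ?thesis
      using Suc by (simp add: minibatch_trace_Suc nth_append length_minibatch_trace)
  next
    case False
    then have "j div n = m"
      using Suc.prems by (metis add.commute div_nat_eqI mult.commute mult_Suc not_le)
    then show ?thesis
      using False Suc.prems by (simp add: minibatch_trace_Suc nth_append length_minibatch_trace)
  qed
qed

lemma minibatch_trace_contiguous:
  assumes "inj_on e {1..m}" "i < j" "j < length (minibatch_trace m n e)"
    and "minibatch_trace m n e ! i = minibatch_trace m n e ! j"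
  shows "minibatch_trace m n e ! (j - 1) = minibatch_trace m n e ! j"
proof -
  have "j < m * n"
    using assms(3) by (simp add: length_minibatch_trace)
  then have "e (i div n + 1) = e (j div n + 1)"
    and "i div n + 1 \<in> {1..m}" "j div n + 1 \<in> {1..m}"
    using assms(2,4) by (auto simp: nth_minibatch_trace intro!: Suc_leI less_mult_imp_div_less)
  then have "i div n = j div n"
    using inj_onD[OF assms(1)] by fastforce
  moreover have "i div n \<le> (j - 1) div n" "(j - 1) div n \<le> j div n"
    using assms(2) by (auto intro: div_le_mono)
  ultimately have "(j - 1) div n = j div n"
    by simp
  then show ?thesis
    using \<open>j < m * n\<close> by (simp add: nth_minibatch_trace)
qed

lemma set_eq_if_count_list_eq:
  assumes "\<forall>x. count_list t x = (if x \<in> A then n else 0)" "n \<ge> 1"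
  shows "set t = A"
proof -
  have "x \<in> set t \<longleftrightarrow> count_list t x \<noteq> 0" for x
    by (simp add: count_list_0_iff)
  then show ?thesis
    using assms by (auto split: if_splits)
qed

lemma length_eq_if_count_list_eq:
  assumes "\<forall>x. count_list t x = (if x \<in> A then n else 0)" "n \<ge> 1"
  shows "length t = card A * n"
proof -
  have "length t = sum (count_list t) A"
    using set_eq_if_count_list_eq[OF assms] sum_count_set[of t "set t"] by auto
  also have "\<dots> = card A * n"
    using assms(1) by simp
  finally show ?thesis .
qed

theorem theorem3:
  fixes m n :: nat and e :: "nat \<Rightarrow> 'a"
  assumes "inj_on e {1..m}" and "n \<ge> 1"
  shows "total_reuse_distance (minibatch_trace m n e) = m * (m + n - 1)
    \<and> (\<forall>t :: 'a list.
          (\<forall>x. count_list t x = (if x \<in> e ` {1..m} then n else 0))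
          \<longrightarrow> total_reuse_distance (minibatch_trace m n e) \<le> total_reuse_distance t)"
proof -
  have card_items: "card (e ` {1..m}) = m"
    using assms(1) by (simp add: card_image)
  have bound: "m * m + (m * n - m) = m * (m + n - 1)"
    using assms(2) by (simp add: algebra_simps diff_mult_distrib2)
  have "total_reuse_distance (minibatch_trace m n e) =
        card (set (minibatch_trace m n e)) * card (set (minibatch_trace m n e))
        + (length (minibatch_trace m n e) - card (set (minibatch_trace m n e)))"
    using minibatch_trace_contiguous[OF assms(1)] by (rule total_reuse_distance_contiguous)
  then have minibatch: "total_reuse_distance (minibatch_trace m n e) = m * (m + n - 1)"
    unfolding set_minibatch_trace[OF assms(2)] length_minibatch_trace card_items bound .
  have "m * (m + n - 1) \<le> total_reuse_distance t"
    if "\<forall>x. count_list t x = (if x \<in> e ` {1..m} then n else 0)" for t :: "'a list"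
    using total_reuse_distance_lower_bound[of t] bound card_items
      set_eq_if_count_list_eq[OF that assms(2)] length_eq_if_count_list_eq[OF that assms(2)]
    by simp
  with minibatch show ?thesis
    by simp
qed

end
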